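(* If two proper metric spaces $(X,d_X)$ and $(Y,d_Y)$ are coarsely equivalent, then their coarse Freudenthal coronas $CF(X)\setminus X$ and $CF(Y)\setminus Y$ are homeomorphic.
   Context: A map $f:X\to Y$ between metric spaces is coarse if $f^{-1}(K)$ is bounded for every bounded $K\subset Y$, and large scale continuous if for each $m\ge0$ there is $M>0$ with $d_X(x,y)<m\Rightarrow d_Y(f(x),f(y))<M$. Maps $f,g:X\to Y$ are close if $\sup_x d_Y(f(x),g(x))<\infty$. $X$ and $Y$ are coarsely equivalent if there are coarse, large scale continuous maps $f:X\to Y$, $g:Y\to X$ with $g\circ f$ close to $\mathrm{id}_X$ and $f\circ g$ close to $\mathrm{id}_Y$ (the maps need not be continuous). A glacial scale on $X$ is a sequence $\mathcal S=\{(K_i,n_i)\}_{i\ge1}$, $K_i$ bounded subsets, $n_i$ natural numbers, such that for every bounded $K$ and $r>0$ there is $i$ with $K\subset K_i$, $n_i>r$; an $\mathcal S$-chain is a finite sequence $x_1,\dots,x_n$ with, for each $i\le n-1$, some $m$ such that $x_i,x_{i+1}\notin K_m$ and $d(x_i,x_{i+1})\le n_m$; $f:X\to\mathbb R$ is glacially oscillating if for every $\epsilon>0$ there is a glacial scale $\mathcal S$ with $|f(x_1)-f(x_n)|<\epsilon$ for all $\mathcal S$-chains. The coarse Freudenthal compactification $CF(X)$ of a proper metric space $X$ is the compactification induced by all continuous glacially oscillating functions $X\to[0,1]$ (each such function extends continuously over $CF(X)$, and restrictions to $X$ of continuous functions on $CF(X)$ are glacially oscillating). *)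

theory Defs
  imports "HOL-Analysis.Analysis"
begin

definition proper_metric_space :: "'a set \<Rightarrow> ('a \<Rightarrow> 'a \<Rightarrow> real) \<Rightarrow> bool" where
  "proper_metric_space M d \<longleftrightarrow> Metric_space M d \<and>
     (\<forall>S. S \<subseteq> M \<and> closedin (Metric_space.mtopology M d) S \<and> Metric_space.mbounded M d S
          \<longrightarrow> compactin (Metric_space.mtopology M d) S)"

definition coarse_map :: "'a set \<Rightarrow> ('a \<Rightarrow> 'a \<Rightarrow> real) \<Rightarrow> 'b set \<Rightarrow> ('b \<Rightarrow> 'b \<Rightarrow> real)
    \<Rightarrow> ('a \<Rightarrow> 'b) \<Rightarrow> bool" where
  "coarse_map M d N e f \<longleftrightarrow>
     (\<forall>K. K \<subseteq> N \<and> Metric_space.mbounded N e K \<longrightarrow> Metric_space.mbounded M d {x \<in> M. f x \<in> K})"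

definition large_scale_continuous :: "'a set \<Rightarrow> ('a \<Rightarrow> 'a \<Rightarrow> real) \<Rightarrow> 'b set \<Rightarrow> ('b \<Rightarrow> 'b \<Rightarrow> real)
    \<Rightarrow> ('a \<Rightarrow> 'b) \<Rightarrow> bool" where
  "large_scale_continuous M d N e f \<longleftrightarrow>
     (\<forall>m\<ge>0. \<exists>R>0. \<forall>x\<in>M. \<forall>y\<in>M. d x y < m \<longrightarrow> e (f x) (f y) < R)"

definition close_maps :: "'a set \<Rightarrow> ('b \<Rightarrow> 'b \<Rightarrow> real) \<Rightarrow> ('a \<Rightarrow> 'b) \<Rightarrow> ('a \<Rightarrow> 'b) \<Rightarrow> bool" where
  "close_maps M e f g \<longleftrightarrow> (\<exists>C. \<forall>x\<in>M. e (f x) (g x) \<le> C)"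

definition coarsely_equivalent :: "'a set \<Rightarrow> ('a \<Rightarrow> 'a \<Rightarrow> real) \<Rightarrow> 'b set \<Rightarrow> ('b \<Rightarrow> 'b \<Rightarrow> real) \<Rightarrow> bool" where
  "coarsely_equivalent M d N e \<longleftrightarrow>
     (\<exists>f g. f \<in> M \<rightarrow> N \<and> g \<in> N \<rightarrow> M \<and>
        coarse_map M d N e f \<and> large_scale_continuous M d N e f \<and>
        coarse_map N e M d g \<and> large_scale_continuous N e M d g \<and>
        close_maps M d (g \<circ> f) id \<and> close_maps N e (f \<circ> g) id)"

text \<open>Glacial scale: the sequence (K i, n i), indexed from 0 instead of 1.\<close>
definition glacial_scale :: "'a set \<Rightarrow> ('a \<Rightarrow> 'a \<Rightarrow> real) \<Rightarrow> (nat \<Rightarrow> 'a set) \<Rightarrow> (nat \<Rightarrow> nat) \<Rightarrow> bool" where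
  "glacial_scale M d K n \<longleftrightarrow>
     (\<forall>i. K i \<subseteq> M \<and> Metric_space.mbounded M d (K i)) \<and>
     (\<forall>B r. B \<subseteq> M \<and> Metric_space.mbounded M d B \<and> r > 0 \<longrightarrow>
        (\<exists>i. B \<subseteq> K i \<and> real (n i) > r))"

definition glacial_chain :: "'a set \<Rightarrow> ('a \<Rightarrow> 'a \<Rightarrow> real) \<Rightarrow> (nat \<Rightarrow> 'a set) \<Rightarrow> (nat \<Rightarrow> nat)
    \<Rightarrow> 'a list \<Rightarrow> bool" where
  "glacial_chain M d K n xs \<longleftrightarrow> xs \<noteq> [] \<and> set xs \<subseteq> M \<and>
     (\<forall>i. i + 1 < length xs \<longrightarrow>
        (\<exists>m. xs ! i \<notin> K m \<and> xs ! (i + 1) \<notin> K m \<and> d (xs ! i) (xs ! (i + 1)) \<le> real (n m)))"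

definition glacially_oscillating :: "'a set \<Rightarrow> ('a \<Rightarrow> 'a \<Rightarrow> real) \<Rightarrow> ('a \<Rightarrow> real) \<Rightarrow> bool" where
  "glacially_oscillating M d f \<longleftrightarrow>
     (\<forall>\<epsilon>>0. \<exists>K n. glacial_scale M d K n \<and>
        (\<forall>xs. glacial_chain M d K n xs \<longrightarrow> \<bar>f (hd xs) - f (last xs)\<bar> < \<epsilon>))"

text \<open>The family of continuous glacially oscillating functions M \<rightarrow> [0,1]
  (taken extensional, i.e. undefined outside M, to avoid duplicates).\<close>
definition CF_functions :: "'a set \<Rightarrow> ('a \<Rightarrow> 'a \<Rightarrow> real) \<Rightarrow> ('a \<Rightarrow> real) set" where
  "CF_functions M d = {f. f \<in> extensional M \<and>
      continuous_map (Metric_space.mtopology M d) (top_of_set {0..1}) f \<and>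
      glacially_oscillating M d f}"

definition CF_cube :: "'a set \<Rightarrow> ('a \<Rightarrow> 'a \<Rightarrow> real) \<Rightarrow> (('a \<Rightarrow> real) \<Rightarrow> real) topology" where
  "CF_cube M d = product_topology (\<lambda>_. top_of_set {0..1}) (CF_functions M d)"

definition CF_eval :: "'a set \<Rightarrow> ('a \<Rightarrow> 'a \<Rightarrow> real) \<Rightarrow> 'a \<Rightarrow> (('a \<Rightarrow> real) \<Rightarrow> real)" where
  "CF_eval M d x = (\<lambda>f\<in>CF_functions M d. f x)"

definition CF_compactification :: "'a set \<Rightarrow> ('a \<Rightarrow> 'a \<Rightarrow> real) \<Rightarrow> (('a \<Rightarrow> real) \<Rightarrow> real) set" where
  "CF_compactification M d = (CF_cube M d) closure_of (CF_eval M d ` M)"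

definition CF_corona :: "'a set \<Rightarrow> ('a \<Rightarrow> 'a \<Rightarrow> real) \<Rightarrow> (('a \<Rightarrow> real) \<Rightarrow> real) topology" where
  "CF_corona M d = subtopology (CF_cube M d) (CF_compactification M d - CF_eval M d ` M)"

end

theory Submission
  imports Defs
begin

text \<open>A coarse equivalence f : X \<rightarrow> Y, g : Y \<rightarrow> X acts on the coronas by pulling back the
  generating functions: a point p of the cube [0,1]^F is sent to \<psi> \<mapsto> p(\<psi> \<circ> f). As f need not be
  continuous, \<psi> \<circ> f is first replaced by its largest 1-Lipschitz minorant, which is again
  continuous and glacially oscillating and differs from \<psi> \<circ> f by a function vanishing at
  infinity. Since X is proper, the corona points are exactly the points of the cube that are
  approximated by evaluations at points leaving every bounded set, so they cannot distinguish two
  generators that agree at infinity. Glacially oscillating functions are slowly oscillating, hence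
  \<phi> \<circ> g \<circ> f agrees with \<phi> at infinity, and the two pullbacks are mutually inverse continuous maps
  between the coronas.\<close>

lemma glacial_chain_mono:
  assumes "glacial_chain M d K n xs" "\<And>i. L i \<subseteq> K i"
  shows "glacial_chain M d L n xs"
  using assms unfolding glacial_chain_def by blast

lemma glacial_chain_pair:
  assumes "x \<in> M" "y \<in> M" "x \<notin> K m" "y \<notin> K m" "d x y \<le> real (n m)"
  shows "glacial_chain M d K n [x, y]"
  using assms unfolding glacial_chain_def by (auto simp: less_Suc_eq)

lemma glacial_chain_ends_outside:
  assumes chain: "glacial_chain M d K n xs" and "hd xs \<noteq> last xs"
  shows "\<exists>m. hd xs \<notin> K m" "\<exists>m. last xs \<notin> K m"
proof -
  have step: "\<And>i. i + 1 < length xs \<Longrightarrow> \<exists>m. xs ! i \<notin> K m \<and> xs ! (i + 1) \<notin> K m"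
    using chain unfolding glacial_chain_def by blast
  have "xs \<noteq> []"
    using chain unfolding glacial_chain_def by blast
  then have "2 \<le> length xs"
    using \<open>hd xs \<noteq> last xs\<close> by (cases xs rule: remdups_adj.cases) auto
  then have "0 + 1 < length xs" "length xs - 2 + 1 < length xs" "length xs - 2 + 1 = length xs - 1"
    by arith+
  then show "\<exists>m. hd xs \<notin> K m" "\<exists>m. last xs \<notin> K m"
    using step \<open>xs \<noteq> []\<close> by (metis hd_conv_nth last_conv_nth)+
qed

lemma glacial_chain_map:
  assumes chain: "glacial_chain M d K n xs" and f: "f \<in> M \<rightarrow> N"
    and step: "\<And>m x y. x \<in> M \<Longrightarrow> y \<in> M \<Longrightarrow> x \<notin> K m \<Longrightarrow> y \<notin> K m \<Longrightarrow> d x y \<le> real (n m) \<Longrightarrow>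
      \<exists>m'. f x \<notin> L m' \<and> f y \<notin> L m' \<and> e (f x) (f y) \<le> real (k m')"
  shows "glacial_chain N e L k (map f xs)"
  unfolding glacial_chain_def
proof (intro conjI allI impI)
  show "map f xs \<noteq> []" "set (map f xs) \<subseteq> N"
    using chain f unfolding glacial_chain_def by auto
  fix i assume i: "i + 1 < length (map f xs)"
  then have "xs ! i \<in> M" "xs ! (i + 1) \<in> M"
    using chain unfolding glacial_chain_def by auto
  moreover obtain m where "xs ! i \<notin> K m" "xs ! (i + 1) \<notin> K m" "d (xs ! i) (xs ! (i + 1)) \<le> real (n m)"
    using chain i unfolding glacial_chain_def by auto
  ultimately show "\<exists>m. map f xs ! i \<notin> L m \<and> map f xs ! (i + 1) \<notin> L m \<and>
      e (map f xs ! i) (map f xs ! (i + 1)) \<le> real (k m)"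
    using step i by simp
qed

lemma openin_product_topology_real_box:
  fixes q :: "'i \<Rightarrow> real"
  assumes "finite J" "J \<subseteq> I"
  shows "openin (product_topology (\<lambda>i. top_of_set (A i)) I)
    {z \<in> topspace (product_topology (\<lambda>i. top_of_set (A i)) I). \<forall>i\<in>J. \<bar>z i - q i\<bar> < \<epsilon>}"
    (is "openin ?T ?box")
proof -
  have "openin ?T {z \<in> topspace ?T. z i \<in> A i \<inter> ball (q i) \<epsilon>}" if "i \<in> J" for i
    using assms(2) that
    by (intro openin_continuous_map_preimage[OF continuous_map_product_projection]) auto
  then have "openin ?T ((\<Inter>i\<in>J. {z \<in> topspace ?T. z i \<in> A i \<inter> ball (q i) \<epsilon>}) \<inter> topspace ?T)"
    using assms(1) by (intro openin_INT) auto
  moreover have "(\<Inter>i\<in>J. {z \<in> topspace ?T. z i \<in> A i \<inter> ball (q i) \<epsilon>}) \<inter> topspace ?T = ?box"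
    using assms(2) by (auto simp: dist_real_def abs_minus_commute dest: PiE_mem)
  ultimately show ?thesis by simp
qed

lemma product_topology_real_box_subset:
  fixes q :: "'i \<Rightarrow> real"
  assumes "openin (product_topology (\<lambda>i. top_of_set (A i)) I) U" "q \<in> U"
  obtains J \<epsilon> where "finite J" "J \<subseteq> I" "\<epsilon> > 0"
    "{z \<in> topspace (product_topology (\<lambda>i. top_of_set (A i)) I). \<forall>i\<in>J. \<bar>z i - q i\<bar> < \<epsilon>} \<subseteq> U"
proof -
  obtain V where fin: "finite {i \<in> I. V i \<noteq> A i}" and V: "\<forall>i\<in>I. openin (top_of_set (A i)) (V i)"
    and "q \<in> Pi\<^sub>E I V" "Pi\<^sub>E I V \<subseteq> U"
    using assms unfolding openin_product_topology_alt by force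
  define J where "J = {i \<in> I. V i \<noteq> A i}"
  have "\<forall>i\<in>J. \<exists>r>0. \<forall>y\<in>A i. dist y (q i) < r \<longrightarrow> y \<in> V i"
    using V \<open>q \<in> Pi\<^sub>E I V\<close> unfolding J_def openin_euclidean_subtopology_iff by (auto simp: PiE_iff)
  then obtain r where r: "\<And>i. i \<in> J \<Longrightarrow> r i > 0 \<and> (\<forall>y\<in>A i. dist y (q i) < r i \<longrightarrow> y \<in> V i)"
    by metis
  define \<epsilon> where "\<epsilon> = Min (insert 1 (r ` J))"
  have "finite J" using fin unfolding J_def .
  then have "\<epsilon> > 0" and \<epsilon>_le: "\<And>i. i \<in> J \<Longrightarrow> \<epsilon> \<le> r i"
    using r unfolding \<epsilon>_def by auto
  have box: "z \<in> Pi\<^sub>E I V" if z: "z \<in> topspace (product_topology (\<lambda>i. top_of_set (A i)) I)"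
    and close: "\<forall>i\<in>J. \<bar>z i - q i\<bar> < \<epsilon>" for z
  proof -
    have "z i \<in> V i" if "i \<in> I" for i
    proof (cases "i \<in> J")
      case True
      then show ?thesis
        using r[OF True] close \<epsilon>_le[OF True] z that by (fastforce simp: dist_real_def PiE_iff)
    next
      case False
      then show ?thesis using z that unfolding J_def by (auto simp: PiE_iff)
    qed
    then show ?thesis using z by (auto simp: PiE_iff)
  qed
  have "J \<subseteq> I"
    unfolding J_def by blast
  then show ?thesis
    using box \<open>Pi\<^sub>E I V \<subseteq> U\<close> by (intro that[OF \<open>finite J\<close> _ \<open>\<epsilon> > 0\<close>]) blast+
qed

lemma in_closure_of_product_topology_real:
  fixes q :: "'i \<Rightarrow> real"
  assumes S: "S \<subseteq> topspace (product_topology (\<lambda>i. top_of_set (A i)) I)"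
  shows "q \<in> product_topology (\<lambda>i. top_of_set (A i)) I closure_of S \<longleftrightarrow>
    q \<in> topspace (product_topology (\<lambda>i. top_of_set (A i)) I) \<and>
    (\<forall>J \<epsilon>. finite J \<and> J \<subseteq> I \<and> \<epsilon> > 0 \<longrightarrow> (\<exists>s\<in>S. \<forall>i\<in>J. \<bar>s i - q i\<bar> < \<epsilon>))"
    (is "_ \<longleftrightarrow> q \<in> topspace ?T \<and> ?approx")
proof
  assume q: "q \<in> ?T closure_of S"
  then have "q \<in> topspace ?T" and meets: "\<And>U. q \<in> U \<Longrightarrow> openin ?T U \<Longrightarrow> \<exists>s\<in>S. s \<in> U"
    unfolding in_closure_of by blast+
  have "\<exists>s\<in>S. \<forall>i\<in>J. \<bar>s i - q i\<bar> < \<epsilon>" if "finite J" "J \<subseteq> I" "\<epsilon> > 0" for J \<epsilon>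
  proof -
    have "\<forall>i\<in>J. \<bar>q i - q i\<bar> < \<epsilon>"
      using \<open>\<epsilon> > 0\<close> by simp
    then have "q \<in> {z \<in> topspace ?T. \<forall>i\<in>J. \<bar>z i - q i\<bar> < \<epsilon>}"
      using \<open>q \<in> topspace ?T\<close> by blast
    then have "\<exists>s\<in>S. s \<in> {z \<in> topspace ?T. \<forall>i\<in>J. \<bar>z i - q i\<bar> < \<epsilon>}"
      by (rule meets[OF _ openin_product_topology_real_box[OF that(1,2)]])
    then show ?thesis
      by blast
  qed
  then show "q \<in> topspace ?T \<and> ?approx"
    using \<open>q \<in> topspace ?T\<close> by blast
next
  assume q: "q \<in> topspace ?T \<and> ?approx"
  have "\<exists>s. s \<in> S \<and> s \<in> U" if U: "q \<in> U" "openin ?T U" for U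
  proof -
    obtain J \<epsilon> where "finite J" "J \<subseteq> I" "\<epsilon> > 0"
      and box: "{z \<in> topspace ?T. \<forall>i\<in>J. \<bar>z i - q i\<bar> < \<epsilon>} \<subseteq> U"
      using product_topology_real_box_subset[OF U(2,1)] by blast
    moreover obtain s where "s \<in> S" "\<forall>i\<in>J. \<bar>s i - q i\<bar> < \<epsilon>"
      using q \<open>finite J\<close> \<open>J \<subseteq> I\<close> \<open>\<epsilon> > 0\<close> by blast
    ultimately show ?thesis
      using S by blast
  qed
  then show "q \<in> ?T closure_of S"
    using q unfolding in_closure_of by blast
qed

definition vanishes_at_infinity :: "'a set \<Rightarrow> ('a \<Rightarrow> 'a \<Rightarrow> real) \<Rightarrow> ('a \<Rightarrow> real) \<Rightarrow> bool" where
  "vanishes_at_infinity M d u \<longleftrightarrow>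
     (\<forall>\<epsilon>>0. \<exists>B. Metric_space.mbounded M d B \<and> (\<forall>x\<in>M - B. \<bar>u x\<bar> < \<epsilon>))"

context Metric_space
begin

lemma mbounded_neighbourhood:
  assumes "mbounded B"
  shows "mbounded {x \<in> M. \<exists>y\<in>B. d x y \<le> C}"
proof -
  obtain c r where B: "B \<subseteq> mcball c r"
    using assms unfolding mbounded_def by blast
  have "x \<in> mcball c (r + C)" if "x \<in> M" "y \<in> B" "d x y \<le> C" for x y
  proof -
    have "c \<in> M" "y \<in> M" "d c y \<le> r"
      using B \<open>y \<in> B\<close> by auto
    then show ?thesis
      using triangle[of c y x] commute[of x y] that by auto
  qed
  then show ?thesis
    by (blast intro: mbounded_subset[OF mbounded_mcball])
qed

lemma vanishes_at_infinity_diff_trans: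
  assumes "vanishes_at_infinity M d (\<lambda>x. a x - b x)" "vanishes_at_infinity M d (\<lambda>x. b x - c x)"
  shows "vanishes_at_infinity M d (\<lambda>x. a x - c x)"
  unfolding vanishes_at_infinity_def
proof (intro allI impI)
  fix \<epsilon> :: real assume "\<epsilon> > 0"
  then have "\<epsilon>/2 > 0" by simp
  then obtain B1 B2 where "mbounded B1" "mbounded B2"
    and ab: "\<And>x. x \<in> M - B1 \<Longrightarrow> \<bar>a x - b x\<bar> < \<epsilon>/2"
    and bc: "\<And>x. x \<in> M - B2 \<Longrightarrow> \<bar>b x - c x\<bar> < \<epsilon>/2"
    using assms unfolding vanishes_at_infinity_def by metis
  have "\<bar>a x - c x\<bar> < \<epsilon>" if "x \<in> M - (B1 \<union> B2)" for x
  proof -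
    have "\<bar>a x - b x\<bar> < \<epsilon>/2" "\<bar>b x - c x\<bar> < \<epsilon>/2"
      using ab bc that by auto
    then show ?thesis by linarith
  qed
  moreover have "mbounded (B1 \<union> B2)"
    using \<open>mbounded B1\<close> \<open>mbounded B2\<close> by (simp add: mbounded_Un)
  ultimately show "\<exists>B. mbounded B \<and> (\<forall>x\<in>M - B. \<bar>a x - c x\<bar> < \<epsilon>)"
    by blast
qed

lemma glacial_scale_exists: "\<exists>K n. glacial_scale M d K n"
proof (cases "M = {}")
  case True
  then have "glacial_scale M d (\<lambda>i. {}) (\<lambda>i. i)"
    unfolding glacial_scale_def using reals_Archimedean2 mbounded_empty by blast
  then show ?thesis by blast
next
  case False
  then obtain x0 where "x0 \<in> M" by blast
  have "\<exists>i. B \<subseteq> mcball x0 (real i) \<and> r < real i" if "mbounded B" for B r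
  proof (cases "B = {}")
    case False
    then obtain c R where "c \<in> M" "B \<subseteq> mcball c R"
      using \<open>mbounded B\<close> unfolding mbounded_def by (metis mcball_eq_empty subset_empty)
    moreover obtain i :: nat where "max r (d c x0 + R) < i"
      using reals_Archimedean2 by blast
    moreover have "mcball c R \<subseteq> mcball x0 (d c x0 + R)"
      using \<open>x0 \<in> M\<close> by (intro mcball_subset) auto
    ultimately show ?thesis
      using mcball_subset_concentric[of "d c x0 + R" "real i" x0] by auto
  qed (use reals_Archimedean2 in auto)
  then have "glacial_scale M d (\<lambda>i. mcball x0 (real i)) (\<lambda>i. i)"
    unfolding glacial_scale_def by (auto simp: mbounded_mcball)
  then show ?thesis by blast
qed

lemma glacial_scale_Un:
  assumes "glacial_scale M d K n" "\<And>i. mbounded (L i)"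
  shows "glacial_scale M d (\<lambda>i. K i \<union> L i) n"
  using assms mbounded_subset_mspace unfolding glacial_scale_def
  by (simp add: mbounded_Un) (meson le_supI1)

lemma glacially_oscillating_perturb:
  assumes u: "glacially_oscillating M d u" and uv: "vanishes_at_infinity M d (\<lambda>x. v x - u x)"
  shows "glacially_oscillating M d v"
  unfolding glacially_oscillating_def
proof (intro allI impI)
  fix \<epsilon> :: real assume "\<epsilon> > 0"
  then obtain K n where scale: "glacial_scale M d K n"
    and osc: "\<And>xs. glacial_chain M d K n xs \<Longrightarrow> \<bar>u (hd xs) - u (last xs)\<bar> < \<epsilon>/3"
    using u unfolding glacially_oscillating_def by (meson divide_pos_pos zero_less_numeral)
  obtain B where "mbounded B" and B: "\<And>x. x \<in> M - B \<Longrightarrow> \<bar>v x - u x\<bar> < \<epsilon>/3"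
    using uv \<open>\<epsilon> > 0\<close> unfolding vanishes_at_infinity_def by (meson divide_pos_pos zero_less_numeral)
  have "\<bar>v (hd xs) - v (last xs)\<bar> < \<epsilon>" if chain: "glacial_chain M d (\<lambda>i. K i \<union> B) n xs" for xs
  proof (cases "hd xs = last xs")
    case False
    have "hd xs \<in> M - B" "last xs \<in> M - B"
      using chain glacial_chain_ends_outside[OF chain False] unfolding glacial_chain_def by auto
    moreover have "\<bar>u (hd xs) - u (last xs)\<bar> < \<epsilon>/3"
      using osc glacial_chain_mono[OF chain] by blast
    ultimately show ?thesis
      using B[of "hd xs"] B[of "last xs"] by linarith
  qed (use \<open>\<epsilon> > 0\<close> in simp)
  then show "\<exists>K n. glacial_scale M d K n \<and>
      (\<forall>xs. glacial_chain M d K n xs \<longrightarrow> \<bar>v (hd xs) - v (last xs)\<bar> < \<epsilon>)"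
    using glacial_scale_Un[OF scale \<open>mbounded B\<close>] by blast
qed

lemma vanishes_at_infinity_imp_glacially_oscillating:
  assumes "vanishes_at_infinity M d v"
  shows "glacially_oscillating M d v"
proof (rule glacially_oscillating_perturb)
  show "glacially_oscillating M d (\<lambda>x. 0)"
    unfolding glacially_oscillating_def using glacial_scale_exists by auto
qed (use assms in simp)

lemma glacially_oscillating_imp_slowly_oscillating:
  assumes u: "glacially_oscillating M d u" and "\<epsilon> > 0"
  obtains B where "mbounded B"
    "\<And>x y. x \<in> M - B \<Longrightarrow> y \<in> M \<Longrightarrow> d x y \<le> C \<Longrightarrow> \<bar>u x - u y\<bar> < \<epsilon>"
proof -
  obtain K n where scale: "glacial_scale M d K n"
    and osc: "\<And>xs. glacial_chain M d K n xs \<Longrightarrow> \<bar>u (hd xs) - u (last xs)\<bar> < \<epsilon>"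
    using u \<open>\<epsilon> > 0\<close> unfolding glacially_oscillating_def by blast
  obtain m where "max C 1 < real (n m)" and "mbounded (K m)"
    using scale unfolding glacial_scale_def by (metis empty_subsetI mbounded_empty zero_less_one max.strict_coboundedI2)
  define B where "B = {x \<in> M. \<exists>y\<in>K m. d x y \<le> max C 0}"
  have "\<bar>u x - u y\<bar> < \<epsilon>" if "x \<in> M - B" "y \<in> M" "d x y \<le> C" for x y
  proof -
    have "x \<notin> K m" "y \<notin> K m"
      using that unfolding B_def by force+
    then have "glacial_chain M d K n [x, y]"
      using that \<open>max C 1 < real (n m)\<close> by (intro glacial_chain_pair) auto
    then show ?thesis using osc by fastforce
  qed
  moreover have "mbounded B"
    unfolding B_def by (rule mbounded_neighbourhood) fact
  ultimately show ?thesis using that by blast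
qed

lemma glacially_oscillating_close_vanishing:
  assumes "glacially_oscillating M d u" "k \<in> M \<rightarrow> M" "close_maps M d k id"
  shows "vanishes_at_infinity M d (\<lambda>x. u (k x) - u x)"
  unfolding vanishes_at_infinity_def
proof (intro allI impI)
  fix \<epsilon> :: real assume "\<epsilon> > 0"
  obtain C where C: "\<And>x. x \<in> M \<Longrightarrow> d x (k x) \<le> C"
    using assms(3) commute unfolding close_maps_def by fastforce
  obtain B where "mbounded B"
    and B: "\<And>x y. x \<in> M - B \<Longrightarrow> y \<in> M \<Longrightarrow> d x y \<le> C \<Longrightarrow> \<bar>u x - u y\<bar> < \<epsilon>"
    using glacially_oscillating_imp_slowly_oscillating[OF assms(1) \<open>\<epsilon> > 0\<close>] by blast
  have "\<bar>u (k x) - u x\<bar> < \<epsilon>" if "x \<in> M - B" for x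
    using B[OF that _ C] that assms(2) by (force simp: abs_minus_commute)
  then show "\<exists>B. mbounded B \<and> (\<forall>x\<in>M - B. \<bar>u (k x) - u x\<bar> < \<epsilon>)"
    using \<open>mbounded B\<close> by blast
qed

lemma continuous_map_unit_interval_if_nonexpansive:
  fixes h :: "'a \<Rightarrow> real"
  assumes unit: "\<And>x. x \<in> M \<Longrightarrow> h x \<in> {0..1}"
    and nonexp: "\<And>x y. x \<in> M \<Longrightarrow> y \<in> M \<Longrightarrow> h x \<le> h y + d x y"
  shows "continuous_map mtopology (top_of_set {0..1}) h"
proof -
  have lip: "\<bar>h x - h y\<bar> \<le> d x y" if "x \<in> M" "y \<in> M" for x y
    using nonexp[OF that] nonexp[OF that(2,1)] commute[of x y] by linarith
  have "continuous_map mtopology euclidean h"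
    unfolding Met_TC.continuous_map_to_metric[simplified]
  proof (intro ballI allI impI)
    fix x and \<epsilon> :: real assume "x \<in> topspace mtopology" "\<epsilon> > 0"
    then have "x \<in> mball x \<epsilon>" "\<forall>y\<in>mball x \<epsilon>. dist (h x) (h y) < \<epsilon>"
      using lip by (force simp: dist_real_def abs_minus_commute)+
    then show "\<exists>U. openin mtopology U \<and> x \<in> U \<and> (\<forall>y\<in>U. dist (h x) (h y) < \<epsilon>)"
      using openin_mball by blast
  qed
  then show ?thesis
    using unit by (auto simp: continuous_map_in_subtopology)
qed

lemma CF_functions_unit_interval:
  assumes "\<phi> \<in> CF_functions M d" "x \<in> M"
  shows "\<phi> x \<in> {0..1}"
proof -
  have "continuous_map mtopology (top_of_set {0..1}) \<phi>"
    using assms(1) by (simp add: CF_functions_def)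
  then show ?thesis
    using continuous_map_funspace assms(2) by fastforce
qed

lemma continuous_map_CF_eval: "continuous_map mtopology (CF_cube M d) (CF_eval M d)"
  unfolding CF_cube_def continuous_map_componentwise
proof (intro conjI ballI)
  show "CF_eval M d ` topspace mtopology \<subseteq> extensional (CF_functions M d)"
    by (auto simp: CF_eval_def)
  fix \<phi> assume \<phi>: "\<phi> \<in> CF_functions M d"
  then have "continuous_map mtopology (top_of_set {0..1}) \<phi>"
    unfolding CF_functions_def by blast
  then show "continuous_map mtopology (top_of_set {0..1}) (\<lambda>x. CF_eval M d x \<phi>)"
    by (rule continuous_map_eq) (use \<phi> in \<open>simp add: CF_eval_def\<close>)
qed

end

definition lipschitz_minorant :: "'a set \<Rightarrow> ('a \<Rightarrow> 'a \<Rightarrow> real) \<Rightarrow> ('a \<Rightarrow> real) \<Rightarrow> 'a \<Rightarrow> real" where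
  "lipschitz_minorant M d u = (\<lambda>x\<in>M. INF y\<in>M. u y + d x y)"

definition tent :: "'a set \<Rightarrow> ('a \<Rightarrow> 'a \<Rightarrow> real) \<Rightarrow> 'a \<Rightarrow> 'a \<Rightarrow> real" where
  "tent M d c = (\<lambda>x\<in>M. max 0 (1 - d c x))"

context Metric_space
begin

context
  fixes u :: "'a \<Rightarrow> real"
  assumes u_unit: "\<And>x. x \<in> M \<Longrightarrow> u x \<in> {0..1}"
begin

lemma lipschitz_minorant_le:
  assumes "x \<in> M" "y \<in> M"
  shows "lipschitz_minorant M d u x \<le> u y + d x y"
proof -
  have "bdd_below ((\<lambda>y. u y + d x y) ` M)"
    using u_unit by (intro bdd_belowI[of _ 0]) force
  then have "(INF y\<in>M. u y + d x y) \<le> u y + d x y"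
    using assms(2) by (rule cINF_lower)
  then show ?thesis
    using assms(1) by (simp add: lipschitz_minorant_def)
qed

lemma lipschitz_minorant_nonneg: "x \<in> M \<Longrightarrow> 0 \<le> lipschitz_minorant M d u x"
  using u_unit by (force simp: lipschitz_minorant_def intro: cINF_greatest)

lemma lipschitz_minorant_lessE:
  assumes "x \<in> M" "lipschitz_minorant M d u x < a"
  obtains y where "y \<in> M" "u y + d x y < a"
  using assms cInf_lessD[of "(\<lambda>y. u y + d x y) ` M" a] that
  by (auto simp: lipschitz_minorant_def)

lemma lipschitz_minorant_nonexpansive:
  assumes "x \<in> M" "x' \<in> M"
  shows "lipschitz_minorant M d u x \<le> lipschitz_minorant M d u x' + d x x'"
proof -
  have "lipschitz_minorant M d u x - d x x' \<le> u y + d x' y" if "y \<in> M" for y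
    using lipschitz_minorant_le[OF assms(1) that] triangle[OF assms that] by linarith
  then have "lipschitz_minorant M d u x - d x x' \<le> (INF y\<in>M. u y + d x' y)"
    using assms(2) by (intro cINF_greatest) auto
  then show ?thesis
    using assms by (simp add: lipschitz_minorant_def)
qed

lemma continuous_map_lipschitz_minorant:
  "continuous_map mtopology (top_of_set {0..1}) (lipschitz_minorant M d u)"
proof (rule continuous_map_unit_interval_if_nonexpansive)
  fix x assume "x \<in> M"
  then have "0 \<le> lipschitz_minorant M d u x" "lipschitz_minorant M d u x \<le> u x"
    using lipschitz_minorant_nonneg lipschitz_minorant_le[of x x] by auto
  then show "lipschitz_minorant M d u x \<in> {0..1}"
    using u_unit[OF \<open>x \<in> M\<close>] by auto
qed (rule lipschitz_minorant_nonexpansive)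

lemma lipschitz_minorant_vanishing:
  assumes "glacially_oscillating M d u"
  shows "vanishes_at_infinity M d (\<lambda>x. lipschitz_minorant M d u x - u x)"
  unfolding vanishes_at_infinity_def
proof (intro allI impI)
  fix \<epsilon> :: real assume "\<epsilon> > 0"
  then obtain B where "mbounded B"
    and B: "\<And>x y. x \<in> M - B \<Longrightarrow> y \<in> M \<Longrightarrow> d x y \<le> 1 \<Longrightarrow> \<bar>u x - u y\<bar> < \<epsilon>/2"
    using glacially_oscillating_imp_slowly_oscillating[OF assms, of "\<epsilon>/2"] by auto
  have "\<bar>lipschitz_minorant M d u x - u x\<bar> < \<epsilon>" if x: "x \<in> M - B" for x
  proof (rule ccontr)
    assume "\<not> ?thesis"
    then have "lipschitz_minorant M d u x < u x - \<epsilon>/2"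
      using lipschitz_minorant_le[of x x] x \<open>\<epsilon> > 0\<close> by auto
    then obtain y where y: "y \<in> M" "u y + d x y < u x - \<epsilon>/2"
      using lipschitz_minorant_lessE x by blast
    moreover have "d x y \<le> 1"
      using y u_unit[of x] u_unit[of y] x \<open>\<epsilon> > 0\<close> by auto
    ultimately have "\<bar>u x - u y\<bar> < \<epsilon>/2"
      using B x by blast
    then show False
      using y(2) nonneg[of x y] by linarith
  qed
  then show "\<exists>B. mbounded B \<and> (\<forall>x\<in>M - B. \<bar>lipschitz_minorant M d u x - u x\<bar> < \<epsilon>)"
    using \<open>mbounded B\<close> by blast
qed

lemma lipschitz_minorant_CF_functions:
  assumes "glacially_oscillating M d u"
  shows "lipschitz_minorant M d u \<in> CF_functions M d"
proof -
  have "lipschitz_minorant M d u \<in> extensional M"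
    by (simp add: lipschitz_minorant_def)
  then show ?thesis
    using continuous_map_lipschitz_minorant
      glacially_oscillating_perturb[OF assms lipschitz_minorant_vanishing[OF assms]]
    unfolding CF_functions_def by blast
qed

end

lemma tent_CF_functions:
  assumes "c \<in> M"
  shows "tent M d c \<in> CF_functions M d"
proof -
  have "continuous_map mtopology (top_of_set {0..1}) (tent M d c)"
  proof (rule continuous_map_unit_interval_if_nonexpansive)
    fix x y assume "x \<in> M" "y \<in> M"
    then show "tent M d c x \<le> tent M d c y + d x y"
      using triangle[OF assms \<open>x \<in> M\<close> \<open>y \<in> M\<close>] by (auto simp: tent_def)
  qed (auto simp: tent_def)
  moreover have "vanishes_at_infinity M d (tent M d c)"
    unfolding vanishes_at_infinity_def
    by (intro allI impI exI[of _ "mcball c 1"]) (auto simp: tent_def mbounded_mcball assms)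
  ultimately show ?thesis
    using vanishes_at_infinity_imp_glacially_oscillating
    unfolding CF_functions_def by (auto simp: tent_def)
qed

end

definition CF_cluster_at_infinity :: "'a set \<Rightarrow> ('a \<Rightarrow> 'a \<Rightarrow> real) \<Rightarrow> (('a \<Rightarrow> real) \<Rightarrow> real) \<Rightarrow> bool" where
  "CF_cluster_at_infinity M d p \<longleftrightarrow>
     (\<forall>B J \<epsilon>. Metric_space.mbounded M d B \<and> finite J \<and> J \<subseteq> CF_functions M d \<and> \<epsilon> > 0 \<longrightarrow>
        (\<exists>x\<in>M - B. \<forall>\<phi>\<in>J. \<bar>\<phi> x - p \<phi>\<bar> < \<epsilon>))"

context Metric_space
begin

lemma in_closure_of_CF_eval_image:
  assumes "S \<subseteq> M"
  shows "p \<in> CF_cube M d closure_of (CF_eval M d ` S) \<longleftrightarrow> p \<in> topspace (CF_cube M d) \<and>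
    (\<forall>J \<epsilon>. finite J \<and> J \<subseteq> CF_functions M d \<and> \<epsilon> > 0 \<longrightarrow> (\<exists>x\<in>S. \<forall>\<phi>\<in>J. \<bar>\<phi> x - p \<phi>\<bar> < \<epsilon>))"
proof -
  have "CF_eval M d ` S \<subseteq> topspace (CF_cube M d)"
    using continuous_map_image_subset_topspace[OF continuous_map_CF_eval] assms by auto
  from in_closure_of_product_topology_real[OF this[unfolded CF_cube_def]]
  show ?thesis
    unfolding CF_cube_def by (auto simp: CF_eval_def subset_iff)
qed

lemma CF_corona_imp_cluster_at_infinity:
  assumes proper: "proper_metric_space M d" and p: "p \<in> topspace (CF_corona M d)"
  shows "p \<in> topspace (CF_cube M d)" "CF_cluster_at_infinity M d p"
proof -
  have closure: "p \<in> CF_cube M d closure_of (CF_eval M d ` M)" and "p \<notin> CF_eval M d ` M"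
    using p by (auto simp: CF_corona_def CF_compactification_def)
  then show "p \<in> topspace (CF_cube M d)"
    by (simp add: in_closure_of)
  show "CF_cluster_at_infinity M d p"
    unfolding CF_cluster_at_infinity_def
  proof (intro allI impI)
    fix B J and \<epsilon> :: real assume asm: "mbounded B \<and> finite J \<and> J \<subseteq> CF_functions M d \<and> \<epsilon> > 0"
    then obtain c r where "B \<subseteq> mcball c r"
      unfolding mbounded_def by blast
    have "compactin mtopology (mcball c r)"
      using proper unfolding proper_metric_space_def
      by (simp add: mcball_subset_mspace mbounded_mcball closedin_mcball)
    then have "closedin (CF_cube M d) (CF_eval M d ` mcball c r)"
      by (intro compactin_imp_closedin image_compactin[OF _ continuous_map_CF_eval])
        (simp add: CF_cube_def Hausdorff_space_product_topology Hausdorff_space_subtopology)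
    then have "p \<notin> CF_cube M d closure_of (CF_eval M d ` mcball c r)"
      using closure_of_closedin \<open>p \<notin> CF_eval M d ` M\<close> mcball_subset_mspace by blast
    moreover have "CF_eval M d ` M = CF_eval M d ` mcball c r \<union> CF_eval M d ` (M - mcball c r)"
      using mcball_subset_mspace by blast
    ultimately have "p \<in> CF_cube M d closure_of (CF_eval M d ` (M - mcball c r))"
      using closure by (simp add: closure_of_Un)
    then obtain x where "x \<in> M - mcball c r" "\<forall>\<phi>\<in>J. \<bar>\<phi> x - p \<phi>\<bar> < \<epsilon>"
      using asm in_closure_of_CF_eval_image[of "M - mcball c r"] by blast
    then show "\<exists>x\<in>M - B. \<forall>\<phi>\<in>J. \<bar>\<phi> x - p \<phi>\<bar> < \<epsilon>"
      using \<open>B \<subseteq> mcball c r\<close> by blast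
  qed
qed

lemma CF_cluster_at_infinity_imp_CF_corona:
  assumes "p \<in> topspace (CF_cube M d)" and cluster: "CF_cluster_at_infinity M d p"
  shows "p \<in> topspace (CF_corona M d)"
proof -
  have "p \<in> CF_cube M d closure_of (CF_eval M d ` M)"
    using assms mbounded_empty unfolding in_closure_of_CF_eval_image[OF subset_refl] CF_cluster_at_infinity_def
    by (metis Diff_empty)
  moreover have "p \<notin> CF_eval M d ` M"
  proof
    assume "p \<in> CF_eval M d ` M"
    then obtain c where "c \<in> M" "p = CF_eval M d c" by blast
    then have "p (tent M d c) = 1"
      using tent_CF_functions by (simp add: CF_eval_def tent_def)
    moreover have "\<exists>x\<in>M - mcball c 1. \<bar>tent M d c x - p (tent M d c)\<bar> < 1"
      using cluster[unfolded CF_cluster_at_infinity_def, rule_format, of "mcball c 1" "{tent M d c}" 1]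
        tent_CF_functions[OF \<open>c \<in> M\<close>] by (simp add: mbounded_mcball)
    then obtain x where "x \<in> M - mcball c 1" "\<bar>tent M d c x - p (tent M d c)\<bar> < 1"
      by blast
    moreover have "tent M d c x = 0"
      using calculation(2) \<open>c \<in> M\<close> by (simp add: tent_def max_def)
    ultimately show False by simp
  qed
  ultimately show ?thesis
    using assms(1) by (simp add: CF_corona_def CF_compactification_def)
qed

lemma CF_cluster_at_infinity_vanishing_eq:
  assumes cluster: "CF_cluster_at_infinity M d p" and "\<phi> \<in> CF_functions M d" "\<phi>' \<in> CF_functions M d"
    and vanish: "vanishes_at_infinity M d (\<lambda>x. \<phi> x - \<phi>' x)"
  shows "p \<phi> = p \<phi>'"
proof -
  have "\<bar>p \<phi> - p \<phi>'\<bar> \<le> 0 + \<epsilon>" if "\<epsilon> > 0" for \<epsilon>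
  proof -
    obtain B where "mbounded B" and B: "\<forall>x\<in>M - B. \<bar>\<phi> x - \<phi>' x\<bar> < \<epsilon>/3"
      using vanish \<open>\<epsilon> > 0\<close> unfolding vanishes_at_infinity_def by (meson divide_pos_pos zero_less_numeral)
    then obtain x where "x \<in> M - B" "\<forall>\<psi>\<in>{\<phi>, \<phi>'}. \<bar>\<psi> x - p \<psi>\<bar> < \<epsilon>/3"
      using cluster[unfolded CF_cluster_at_infinity_def, rule_format, of B "{\<phi>, \<phi>'}" "\<epsilon>/3"]
        assms(2,3) \<open>\<epsilon> > 0\<close> by auto
    then have "\<bar>\<phi> x - \<phi>' x\<bar> < \<epsilon>/3" "\<bar>\<phi> x - p \<phi>\<bar> < \<epsilon>/3" "\<bar>\<phi>' x - p \<phi>'\<bar> < \<epsilon>/3"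
      using B by auto
    then show ?thesis by linarith
  qed
  then show ?thesis
    using field_le_epsilon[of "\<bar>p \<phi> - p \<phi>'\<bar>" 0] by simp
qed

end

locale coarse_lsc_map =
  X: Metric_space M d + Y: Metric_space N e
  for M :: "'a set" and d :: "'a \<Rightarrow> 'a \<Rightarrow> real" and N :: "'b set" and e :: "'b \<Rightarrow> 'b \<Rightarrow> real" +
  fixes f :: "'a \<Rightarrow> 'b"
  assumes maps_into: "f \<in> M \<rightarrow> N"
    and coarse: "coarse_map M d N e f"
    and lsc: "large_scale_continuous M d N e f"
begin

lemma mbounded_preimage: "Y.mbounded B \<Longrightarrow> X.mbounded {x \<in> M. f x \<in> B}"
  using coarse Y.mbounded_subset_mspace unfolding coarse_map_def by blast

lemma vanishes_at_infinity_comp: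
  assumes "vanishes_at_infinity N e v"
  shows "vanishes_at_infinity M d (\<lambda>x. v (f x))"
  unfolding vanishes_at_infinity_def
proof (intro allI impI)
  fix \<epsilon> :: real assume "\<epsilon> > 0"
  then obtain B where "Y.mbounded B" "\<forall>y\<in>N - B. \<bar>v y\<bar> < \<epsilon>"
    using assms unfolding vanishes_at_infinity_def by blast
  then show "\<exists>B. X.mbounded B \<and> (\<forall>x\<in>M - B. \<bar>v (f x)\<bar> < \<epsilon>)"
    using mbounded_preimage maps_into by (intro exI[of _ "{x \<in> M. f x \<in> B}"]) auto
qed

lemma glacial_scale_pullback:
  assumes scale: "glacial_scale N e K n"
  obtains K' n' where "glacial_scale M d K' n'"
    "\<And>xs. glacial_chain M d K' n' xs \<Longrightarrow> glacial_chain N e K n (map f xs)"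
proof -
  have "\<forall>k::nat. \<exists>R>0. \<forall>x\<in>M. \<forall>y\<in>M. d x y < real k + 1 \<longrightarrow> e (f x) (f y) < R"
    using lsc unfolding large_scale_continuous_def by (metis add_nonneg_nonneg of_nat_0_le_iff zero_le_one)
  then obtain R where "\<And>k. R k > 0"
    and R: "\<And>k x y. x \<in> M \<Longrightarrow> y \<in> M \<Longrightarrow> d x y < real k + 1 \<Longrightarrow> e (f x) (f y) < R k"
    by metis
  then have "\<forall>k. \<exists>i. R k < real (n i)"
    using scale unfolding glacial_scale_def by (metis Y.mbounded_empty empty_subsetI)
  then obtain j where j: "\<And>k. R k < real (n (j k))"
    by metis
  obtain K0 n0 where scale0: "glacial_scale M d K0 n0"
    using X.glacial_scale_exists by blast
  define K' where "K' i = K0 i \<union> {x \<in> M. f x \<in> K (j (n0 i))}" for i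
  have "glacial_scale M d K' n0"
    unfolding K'_def using scale
    by (intro X.glacial_scale_Un[OF scale0] mbounded_preimage) (simp add: glacial_scale_def)
  moreover have "glacial_chain N e K n (map f xs)" if "glacial_chain M d K' n0 xs" for xs
  proof (rule glacial_chain_map[OF that maps_into])
    fix m x y assume "x \<in> M" "y \<in> M" "x \<notin> K' m" "y \<notin> K' m" "d x y \<le> real (n0 m)"
    moreover have "e (f x) (f y) < real (n (j (n0 m)))"
      using R[of x y "n0 m"] j[of "n0 m"] calculation by simp
    ultimately show "\<exists>m'. f x \<notin> K m' \<and> f y \<notin> K m' \<and> e (f x) (f y) \<le> real (n m')"
      unfolding K'_def by (intro exI[of _ "j (n0 m)"]) auto
  qed
  ultimately show ?thesis
    using that by blast
qed

lemma glacially_oscillating_comp: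
  assumes "glacially_oscillating N e \<psi>"
  shows "glacially_oscillating M d (\<lambda>x. \<psi> (f x))"
  unfolding glacially_oscillating_def
proof (intro allI impI)
  fix \<epsilon> :: real assume "\<epsilon> > 0"
  then obtain K n where scale: "glacial_scale N e K n"
    and osc: "\<And>ys. glacial_chain N e K n ys \<Longrightarrow> \<bar>\<psi> (hd ys) - \<psi> (last ys)\<bar> < \<epsilon>"
    using assms unfolding glacially_oscillating_def by blast
  obtain K' n' where scale': "glacial_scale M d K' n'"
    and map_chain: "\<And>xs. glacial_chain M d K' n' xs \<Longrightarrow> glacial_chain N e K n (map f xs)"
    using glacial_scale_pullback[OF scale] by blast
  have "\<bar>\<psi> (f (hd xs)) - \<psi> (f (last xs))\<bar> < \<epsilon>" if chain: "glacial_chain M d K' n' xs" for xs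
  proof -
    have "xs \<noteq> []"
      using chain unfolding glacial_chain_def by blast
    then show ?thesis
      using osc[OF map_chain[OF chain]] by (simp add: hd_map last_map)
  qed
  then show "\<exists>K n. glacial_scale M d K n \<and>
      (\<forall>xs. glacial_chain M d K n xs \<longrightarrow> \<bar>\<psi> (f (hd xs)) - \<psi> (f (last xs))\<bar> < \<epsilon>)"
    using scale' by blast
qed

lemma CF_functions_comp_unit_interval: "\<psi> \<in> CF_functions N e \<Longrightarrow> x \<in> M \<Longrightarrow> \<psi> (f x) \<in> {0..1}"
  using Y.CF_functions_unit_interval maps_into by blast

lemma CF_functions_comp_glacially_oscillating:
  "\<psi> \<in> CF_functions N e \<Longrightarrow> glacially_oscillating M d (\<lambda>x. \<psi> (f x))"
  by (rule glacially_oscillating_comp) (simp add: CF_functions_def)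

lemma lipschitz_minorant_comp_CF_functions:
  assumes "\<psi> \<in> CF_functions N e"
  shows "lipschitz_minorant M d (\<lambda>x. \<psi> (f x)) \<in> CF_functions M d"
proof (rule X.lipschitz_minorant_CF_functions)
  show "\<And>x. x \<in> M \<Longrightarrow> \<psi> (f x) \<in> {0..1}"
    by (rule CF_functions_comp_unit_interval[OF assms])
  show "glacially_oscillating M d (\<lambda>x. \<psi> (f x))"
    by (rule CF_functions_comp_glacially_oscillating[OF assms])
qed

lemma lipschitz_minorant_comp_vanishing:
  assumes "\<psi> \<in> CF_functions N e"
  shows "vanishes_at_infinity M d (\<lambda>x. lipschitz_minorant M d (\<lambda>x. \<psi> (f x)) x - \<psi> (f x))"
proof (rule X.lipschitz_minorant_vanishing)
  show "\<And>x. x \<in> M \<Longrightarrow> \<psi> (f x) \<in> {0..1}"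
    by (rule CF_functions_comp_unit_interval[OF assms])
  show "glacially_oscillating M d (\<lambda>x. \<psi> (f x))"
    by (rule CF_functions_comp_glacially_oscillating[OF assms])
qed

end

definition CF_transfer :: "'a set \<Rightarrow> ('a \<Rightarrow> 'a \<Rightarrow> real) \<Rightarrow> 'b set \<Rightarrow> ('b \<Rightarrow> 'b \<Rightarrow> real) \<Rightarrow> ('a \<Rightarrow> 'b)
    \<Rightarrow> (('a \<Rightarrow> real) \<Rightarrow> real) \<Rightarrow> (('b \<Rightarrow> real) \<Rightarrow> real)" where
  "CF_transfer M d N e f p = (\<lambda>\<psi>\<in>CF_functions N e. p (lipschitz_minorant M d (\<lambda>x. \<psi> (f x))))"

context coarse_lsc_map
begin

lemma CF_transfer_in_cube:
  assumes "p \<in> topspace (CF_cube M d)"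
  shows "CF_transfer M d N e f p \<in> topspace (CF_cube N e)"
  using assms lipschitz_minorant_comp_CF_functions
  by (auto simp: CF_cube_def CF_transfer_def PiE_iff)

lemma continuous_map_CF_transfer:
  "continuous_map (CF_cube M d) (CF_cube N e) (CF_transfer M d N e f)"
  unfolding CF_cube_def continuous_map_componentwise
proof (intro conjI ballI)
  show "CF_transfer M d N e f ` topspace (product_topology (\<lambda>_. top_of_set {0..1}) (CF_functions M d))
      \<subseteq> extensional (CF_functions N e)"
    by (auto simp: CF_transfer_def)
  fix \<psi> assume \<psi>: "\<psi> \<in> CF_functions N e"
  show "continuous_map (product_topology (\<lambda>_. top_of_set {0..1}) (CF_functions M d)) (top_of_set {0..1})
      (\<lambda>p. CF_transfer M d N e f p \<psi>)"
    by (rule continuous_map_eq[OF continuous_map_product_projection[OF lipschitz_minorant_comp_CF_functions[OF \<psi>]]])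
      (use \<psi> in \<open>simp add: CF_transfer_def\<close>)
qed

lemma CF_transfer_cluster_at_infinity:
  assumes cluster: "CF_cluster_at_infinity M d p"
  shows "CF_cluster_at_infinity N e (CF_transfer M d N e f p)"
  unfolding CF_cluster_at_infinity_def
proof (intro allI impI)
  fix B J and \<epsilon> :: real assume asm: "Y.mbounded B \<and> finite J \<and> J \<subseteq> CF_functions N e \<and> \<epsilon> > 0"
  let ?A = "\<lambda>\<psi>. lipschitz_minorant M d (\<lambda>x. \<psi> (f x))"
  have "\<forall>\<psi>\<in>J. \<exists>B'. X.mbounded B' \<and> (\<forall>x\<in>M - B'. \<bar>?A \<psi> x - \<psi> (f x)\<bar> < \<epsilon>/2)"
    using asm lipschitz_minorant_comp_vanishing unfolding vanishes_at_infinity_def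
    by (metis half_gt_zero subsetD)
  then obtain B' where B': "\<And>\<psi>. \<psi> \<in> J \<Longrightarrow> X.mbounded (B' \<psi>)"
    and near: "\<And>\<psi> x. \<psi> \<in> J \<Longrightarrow> x \<in> M - B' \<psi> \<Longrightarrow> \<bar>?A \<psi> x - \<psi> (f x)\<bar> < \<epsilon>/2"
    by metis
  define B'' where "B'' = (\<Union>\<psi>\<in>J. B' \<psi>) \<union> {x \<in> M. f x \<in> B}"
  have "X.mbounded (\<Union>\<psi>\<in>J. B' \<psi>)"
    using asm B' by (intro X.mbounded_Union) auto
  then have "X.mbounded B''"
    unfolding B''_def using asm mbounded_preimage by (simp add: X.mbounded_Un)
  moreover have "finite (?A ` J)" "?A ` J \<subseteq> CF_functions M d" "\<epsilon>/2 > 0"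
    using asm lipschitz_minorant_comp_CF_functions by auto
  ultimately have "\<exists>x\<in>M - B''. \<forall>\<phi>\<in>?A ` J. \<bar>\<phi> x - p \<phi>\<bar> < \<epsilon>/2"
    using cluster[unfolded CF_cluster_at_infinity_def, rule_format, of B'' "?A ` J" "\<epsilon>/2"] by blast
  then obtain x where x: "x \<in> M - B''" and approx: "\<forall>\<psi>\<in>J. \<bar>?A \<psi> x - p (?A \<psi>)\<bar> < \<epsilon>/2"
    by auto
  have "\<bar>\<psi> (f x) - CF_transfer M d N e f p \<psi>\<bar> < \<epsilon>" if "\<psi> \<in> J" for \<psi>
  proof -
    have "\<bar>?A \<psi> x - \<psi> (f x)\<bar> < \<epsilon>/2" "\<bar>?A \<psi> x - p (?A \<psi>)\<bar> < \<epsilon>/2"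
      using near[OF that] approx that x unfolding B''_def by auto
    moreover have "CF_transfer M d N e f p \<psi> = p (?A \<psi>)"
      using that asm by (auto simp: CF_transfer_def)
    ultimately show ?thesis by linarith
  qed
  moreover have "f x \<in> N - B"
    using x maps_into unfolding B''_def by auto
  ultimately show "\<exists>y\<in>N - B. \<forall>\<psi>\<in>J. \<bar>\<psi> y - CF_transfer M d N e f p \<psi>\<bar> < \<epsilon>"
    by blast
qed

lemma CF_transfer_inverse:
  assumes "coarse_lsc_map N e M d g" and close: "close_maps M d (g \<circ> f) id"
    and p: "p \<in> topspace (CF_cube M d)" and cluster: "CF_cluster_at_infinity M d p"
  shows "CF_transfer N e M d g (CF_transfer M d N e f p) = p"
proof
  interpret G: coarse_lsc_map N e M d g by fact
  fix \<phi>
  show "CF_transfer N e M d g (CF_transfer M d N e f p) \<phi> = p \<phi>"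
  proof (cases "\<phi> \<in> CF_functions M d")
    case False
    then show ?thesis
      using p by (auto simp: CF_transfer_def CF_cube_def PiE_iff extensional_def)
  next
    case True
    define w where "w = lipschitz_minorant N e (\<lambda>y. \<phi> (g y))"
    define a where "a = lipschitz_minorant M d (\<lambda>x. w (f x))"
    have "w \<in> CF_functions N e" "a \<in> CF_functions M d"
      unfolding a_def w_def
      using True G.lipschitz_minorant_comp_CF_functions lipschitz_minorant_comp_CF_functions by blast+
    have "g \<circ> f \<in> M \<rightarrow> M"
      using maps_into G.maps_into by auto
    have "vanishes_at_infinity M d (\<lambda>x. a x - w (f x))"
      unfolding a_def by (rule lipschitz_minorant_comp_vanishing) fact
    moreover have "vanishes_at_infinity M d (\<lambda>x. w (f x) - \<phi> (g (f x)))"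
      using vanishes_at_infinity_comp[OF G.lipschitz_minorant_comp_vanishing[OF True]]
      unfolding w_def .
    moreover have "vanishes_at_infinity M d (\<lambda>x. \<phi> (g (f x)) - \<phi> x)"
      using X.glacially_oscillating_close_vanishing[OF _ \<open>g \<circ> f \<in> M \<rightarrow> M\<close> close] True
      unfolding CF_functions_def by simp
    ultimately have "vanishes_at_infinity M d (\<lambda>x. a x - \<phi> x)"
      by (rule X.vanishes_at_infinity_diff_trans[OF _ X.vanishes_at_infinity_diff_trans])
    then have "p a = p \<phi>"
      using X.CF_cluster_at_infinity_vanishing_eq[OF cluster \<open>a \<in> CF_functions M d\<close> True] by blast
    then show ?thesis
      using True \<open>w \<in> CF_functions N e\<close> by (simp add: CF_transfer_def a_def w_def)
  qed
qed

lemma continuous_map_CF_transfer_corona: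
  assumes "proper_metric_space M d"
  shows "continuous_map (CF_corona M d) (CF_corona N e) (CF_transfer M d N e f)"
proof -
  have "continuous_map (CF_corona M d) (CF_cube N e) (CF_transfer M d N e f)"
    unfolding CF_corona_def by (rule continuous_map_from_subtopology[OF continuous_map_CF_transfer])
  moreover have "CF_transfer M d N e f p \<in> topspace (CF_corona N e)" if "p \<in> topspace (CF_corona M d)" for p
    using X.CF_corona_imp_cluster_at_infinity[OF assms that] CF_transfer_in_cube
      CF_transfer_cluster_at_infinity Y.CF_cluster_at_infinity_imp_CF_corona by blast
  ultimately show ?thesis
    by (auto simp: CF_corona_def continuous_map_in_subtopology)
qed

end

theorem proposition4p6:
  fixes M :: "'a set" and d :: "'a \<Rightarrow> 'a \<Rightarrow> real"
    and N :: "'b set" and e :: "'b \<Rightarrow> 'b \<Rightarrow> real"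
  assumes "proper_metric_space M d" and "proper_metric_space N e"
    and "coarsely_equivalent M d N e"
  shows "CF_corona M d homeomorphic_space CF_corona N e"
proof -
  obtain f g where "f \<in> M \<rightarrow> N" "coarse_map M d N e f" "large_scale_continuous M d N e f"
    and "g \<in> N \<rightarrow> M" "coarse_map N e M d g" "large_scale_continuous N e M d g"
    and gf: "close_maps M d (g \<circ> f) id" and fg: "close_maps N e (f \<circ> g) id"
    using assms(3) unfolding coarsely_equivalent_def by blast
  moreover have "Metric_space M d" "Metric_space N e"
    using assms(1,2) unfolding proper_metric_space_def by auto
  ultimately interpret F: coarse_lsc_map M d N e f + G: coarse_lsc_map N e M d g
    by (simp_all add: coarse_lsc_map_def coarse_lsc_map_axioms_def)
  have "homeomorphic_maps (CF_corona M d) (CF_corona N e) (CF_transfer M d N e f) (CF_transfer N e M d g)"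
    unfolding homeomorphic_maps_def
    using F.continuous_map_CF_transfer_corona[OF assms(1)] G.continuous_map_CF_transfer_corona[OF assms(2)]
      F.CF_transfer_inverse[OF G.coarse_lsc_map_axioms gf] G.CF_transfer_inverse[OF F.coarse_lsc_map_axioms fg]
      F.X.CF_corona_imp_cluster_at_infinity[OF assms(1)] F.Y.CF_corona_imp_cluster_at_infinity[OF assms(2)]
    by blast
  then show ?thesis
    by (rule homeomorphic_maps_imp_homeomorphic_space)
qed

end
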